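(* Assume that there exists a generalized Sierpinski set. Then there exists a nonprincipal filter on $\omega$ which is meager but not Lebesgue measurable (as a subset of $2^\omega$).
   Context: For a regular uncountable cardinal $\kappa$, a set $S\subseteq 2^\omega$ of size $\kappa$ is a generalized Sierpinski set (of size $\kappa$) if $|S\cap H|<\kappa$ for every measure zero set $H\subseteq 2^\omega$. A filter on $\omega$ is identified with the set of characteristic functions of its elements, a subset of $2^\omega$, which carries the product topology and the standard product (Lebesgue) measure. *)

theory Defs
  imports "HOL-Analysis.Analysis" "HOL-Probability.Probability"
begin

definition cantor_top :: "(nat \<Rightarrow> bool) topology" where
  "cantor_top = product_topology (\<lambda>_. discrete_topology (UNIV :: bool set)) UNIV"

text \<open>Standard product (fair coin) measure on 2^omega and its completion (Lebesgue measure).\<close>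
definition cantor_measure :: "(nat \<Rightarrow> bool) measure" where
  "cantor_measure = PiM UNIV (\<lambda>_. measure_pmf (bernoulli_pmf (1/2)))"

definition lebesgue_measurable_cantor :: "(nat \<Rightarrow> bool) set \<Rightarrow> bool" where
  "lebesgue_measurable_cantor A \<longleftrightarrow> A \<in> sets (completion cantor_measure)"

definition measure_zero_cantor :: "(nat \<Rightarrow> bool) set \<Rightarrow> bool" where
  "measure_zero_cantor H \<longleftrightarrow> H \<in> null_sets (completion cantor_measure)"

definition nowhere_dense_in :: "'a topology \<Rightarrow> 'a set \<Rightarrow> bool" where
  "nowhere_dense_in X A \<longleftrightarrow> A \<subseteq> topspace X \<and> X interior_of (X closure_of A) = {}"

definition meager_in :: "'a topology \<Rightarrow> 'a set \<Rightarrow> bool" where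
  "meager_in X A \<longleftrightarrow> (\<exists>\<F>. countable \<F> \<and> (\<forall>N\<in>\<F>. nowhere_dense_in X N) \<and> A \<subseteq> \<Union>\<F>)"

definition generalized_Sierpinski_set :: "(nat \<Rightarrow> bool) set \<Rightarrow> bool" where
  "generalized_Sierpinski_set S \<longleftrightarrow>
     uncountable S \<and> regularCard (card_of S) \<and>
     (\<forall>H. measure_zero_cantor H \<longrightarrow> (card_of (S \<inter> H), card_of S) \<in> ordLess)"

definition filter_on_nat :: "nat set set \<Rightarrow> bool" where
  "filter_on_nat F \<longleftrightarrow> UNIV \<in> F \<and> {} \<notin> F \<and>
     (\<forall>A B. A \<in> F \<longrightarrow> A \<subseteq> B \<longrightarrow> B \<in> F) \<and>
     (\<forall>A B. A \<in> F \<longrightarrow> B \<in> F \<longrightarrow> A \<inter> B \<in> F)"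

definition principal_filter_on_nat :: "nat set set \<Rightarrow> bool" where
  "principal_filter_on_nat F \<longleftrightarrow> (\<exists>A. F = {B. A \<subseteq> B})"

text \<open>A filter identified with the set of characteristic functions of its elements.\<close>
definition char_set :: "nat set set \<Rightarrow> (nat \<Rightarrow> bool) set" where
  "char_set F = (\<lambda>A n. n \<in> A) ` F"

end

theory Submission
  imports Defs "HOL-Library.Countable_Set_Type"
begin

(* Let S be a generalized Sierpinski set of size kappa. Call w \<subseteq> omega thick if
   sum_n (1 - 2^-j)^|w \<inter> I_n| < \<infinity> for every j, where I_n = [2^n, 2^(n+1)). By Zorn's lemma
   there is a maximal X \<subseteq> S all of whose finite intersections are thick. Such an X lies in no
   null set: otherwise |X| < kappa, and since for a thick w almost every x keeps w \<inter> x thick,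
   the points of S spoiling some finite intersection of X lie in fewer than kappa null sets;
   by regularity of kappa they do not exhaust S, so X could be extended.
   Let F be the filter generated by X and the cofinite sets. Every member of F contains a thick
   set minus a finite set, so it meets almost every I_n, which makes F meager.
   F is invariant under finite modifications and disjoint from its image under complementation;
   by Kolmogorov's zero-one law a measurable such set is null, yet F contains X. *)

unbundle cardinal_syntax

section \<open>Coin tossing and coordinate flips\<close>

abbreviation coin :: "bool measure" where
  "coin \<equiv> measure_pmf (bernoulli_pmf (1/2))"

lemma cantor_measure_eq: "cantor_measure = PiM UNIV (\<lambda>_. coin)"
  by (simp add: cantor_measure_def)

lemma prob_space_cantor_measure: "prob_space cantor_measure"
  unfolding cantor_measure_def by (intro prob_space_PiM prob_space_measure_pmf)

lemma space_cantor_measure [simp]: "space cantor_measure = UNIV"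
  by (simp add: cantor_measure_eq space_PiM)

lemma measurable_cantor_coordinate [measurable]:
  "(\<lambda>x. x i) \<in> measurable cantor_measure (count_space UNIV)"
  unfolding cantor_measure_def by measurable

lemma distr_cantor_measure_coordinate: "distr cantor_measure coin (\<lambda>x. x i) = coin"
  unfolding cantor_measure_eq by (subst distr_PiM_component) (auto intro: prob_space_measure_pmf)

lemma indep_vars_cantor_coordinates:
  "prob_space.indep_vars cantor_measure (\<lambda>_. coin) (\<lambda>i x. x i) UNIV"
proof -
  interpret prob_space cantor_measure by (rule prob_space_cantor_measure)
  have "distr cantor_measure (PiM UNIV (\<lambda>_. coin)) (\<lambda>x. \<lambda>i\<in>UNIV. x i) = cantor_measure"
    by (simp add: restrict_UNIV distr_id flip: cantor_measure_eq)
  also have "\<dots> = PiM UNIV (\<lambda>i. distr cantor_measure coin (\<lambda>x. x i))"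
    unfolding distr_cantor_measure_coordinate by (rule cantor_measure_eq)
  finally show ?thesis
    by (subst indep_vars_iff_distr_eq_PiM) auto
qed

lemma measurable_into_coin: "measurable M coin = measurable M (count_space UNIV)"
  by (rule measurable_cong_sets) auto

definition flip_at :: "nat set \<Rightarrow> (nat \<Rightarrow> bool) \<Rightarrow> nat \<Rightarrow> bool" where
  "flip_at E x i = (x i \<noteq> (i \<in> E))"

lemma measurable_flip_at_coordinate:
  "(\<lambda>x. flip_at E x i) \<in> measurable cantor_measure (count_space UNIV)"
  unfolding flip_at_def
  by (rule measurable_compose[OF measurable_cantor_coordinate measurable_count_space])

lemma flip_at_flip_at: "flip_at E (flip_at E' x) = flip_at ((E - E') \<union> (E' - E)) x"
  by (auto simp: flip_at_def fun_eq_iff)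

lemma flip_at_empty [simp]: "flip_at {} x = x"
  by (simp add: flip_at_def fun_eq_iff)

lemma flip_at_idem [simp]: "flip_at E (flip_at E x) = x"
  by (auto simp: flip_at_def fun_eq_iff)

lemma measurable_flip_at: "flip_at E \<in> measurable cantor_measure cantor_measure"
  unfolding cantor_measure_eq
  by (rule measurable_PiM_single')
    (auto simp: space_PiM measurable_into_coin measurable_flip_at_coordinate[unfolded cantor_measure_eq])

lemma distr_coin_Not: "distr coin coin Not = coin"
proof (rule measure_eqI)
  fix A :: "bool set"
  have "Not -` A = Not ` A"
    by force
  then have "emeasure coin (Not -` A) = emeasure coin A"
    by (simp add: emeasure_measure_pmf_finite card_image inj_on_def)
  then show "emeasure (distr coin coin Not) A = emeasure coin A"
    by (subst emeasure_distr) auto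
qed simp

lemma distr_flip_at: "distr cantor_measure cantor_measure (flip_at E) = cantor_measure"
proof -
  interpret prob_space cantor_measure by (rule prob_space_cantor_measure)
  have "indep_vars (\<lambda>_. coin) (\<lambda>i x. flip_at E x i) UNIV"
    unfolding flip_at_def by (rule indep_vars_compose2[OF indep_vars_cantor_coordinates]) simp
  with measurable_flip_at_coordinate
  have "distr cantor_measure (PiM UNIV (\<lambda>_. coin)) (\<lambda>x. \<lambda>i\<in>UNIV. flip_at E x i)
      = PiM UNIV (\<lambda>i. distr cantor_measure coin (\<lambda>x. flip_at E x i))"
    by (subst (asm) indep_vars_iff_distr_eq_PiM) (auto simp: measurable_into_coin)
  moreover have "distr cantor_measure coin (\<lambda>x. flip_at E x i) = coin" for i
  proof (cases "i \<in> E")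
    case True
    have "distr cantor_measure coin (\<lambda>x. flip_at E x i)
        = distr (distr cantor_measure coin (\<lambda>x. x i)) coin Not"
      using True by (subst distr_distr) (auto simp: comp_def flip_at_def measurable_into_coin)
    then show ?thesis
      by (simp add: distr_cantor_measure_coordinate distr_coin_Not)
  qed (simp add: flip_at_def distr_cantor_measure_coordinate)
  ultimately show ?thesis
    by (simp add: restrict_UNIV flip: cantor_measure_eq)
qed

lemma emeasure_flip_at_vimage:
  assumes "A \<in> sets cantor_measure"
  shows "emeasure cantor_measure (flip_at E -` A) = emeasure cantor_measure A"
  using emeasure_distr[OF measurable_flip_at assms, of E] by (simp add: distr_flip_at)

lemma power_card_Int_eq_prod:
  fixes d :: "'a :: comm_monoid_mult"
  assumes "finite A"
  shows "d ^ card (A \<inter> {i. x i}) = (\<Prod>i\<in>A. if x i then d else 1)"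
  using assms by (simp add: prod.If_cases)

lemma nn_integral_cantor_coordinate_if:
  fixes d :: real
  assumes "0 \<le> d"
  shows "(\<integral>\<^sup>+x. ennreal (if x i then d else 1) \<partial>cantor_measure) = ennreal ((1 + d) / 2)"
proof -
  have "(\<integral>\<^sup>+x. ennreal (if x i then d else 1) \<partial>cantor_measure)
      = (\<integral>\<^sup>+b. ennreal (if b then d else 1) \<partial>distr cantor_measure coin (\<lambda>x. x i))"
    by (subst nn_integral_distr) (auto simp: measurable_into_coin)
  also have "\<dots> = ennreal d * ennreal (1/2) + ennreal 1 * ennreal (1 - 1/2)"
    using assms by (simp add: distr_cantor_measure_coordinate nn_integral_bernoulli_pmf)
  also have "\<dots> = ennreal (d * (1/2) + 1 * (1 - 1/2))"
    using assms by (simp only: ennreal_plus ennreal_mult mult_nonneg_nonneg)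
  also have "\<dots> = ennreal ((1 + d) / 2)"
    by (simp add: field_simps)
  finally show ?thesis .
qed

lemma nn_integral_cantor_power_card_Int:
  fixes d :: real
  assumes A: "finite A" and d: "0 \<le> d"
  shows "(\<integral>\<^sup>+x. ennreal (d ^ card (A \<inter> {i. x i})) \<partial>cantor_measure) = ennreal (((1 + d) / 2) ^ card A)"
proof -
  interpret prob_space cantor_measure by (rule prob_space_cantor_measure)
  have indep: "indep_vars (\<lambda>_. borel) (\<lambda>i x. ennreal (if x i then d else 1)) A"
    by (rule indep_vars_subset[OF indep_vars_compose2[OF indep_vars_cantor_coordinates]]) auto
  have "(\<integral>\<^sup>+x. ennreal (d ^ card (A \<inter> {i. x i})) \<partial>cantor_measure)
      = (\<integral>\<^sup>+x. (\<Prod>i\<in>A. ennreal (if x i then d else 1)) \<partial>cantor_measure)"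
    using A d by (simp add: power_card_Int_eq_prod prod_ennreal)
  also have "\<dots> = (\<Prod>i\<in>A. \<integral>\<^sup>+x. ennreal (if x i then d else 1) \<partial>cantor_measure)"
    by (rule indep_vars_nn_integral[OF A indep]) simp
  also have "\<dots> = ennreal (((1 + d) / 2) ^ card A)"
    using d by (simp add: nn_integral_cantor_coordinate_if prod_ennreal ennreal_power)
  finally show ?thesis .
qed

section \<open>Thick sets\<close>

definition block :: "nat \<Rightarrow> nat set" where
  "block n = {2^n..<2^Suc n}"

(* Averaging c^|A \<inter> x| over x gives ((1 + c)/2)^|A|, and (1 + (1 - 2^-j))/2 = 1 - 2^-(j+1):
   this is why thickness survives intersection with almost every x (AE_thick_Int). *)
definition thick :: "nat set \<Rightarrow> bool" where
  "thick w \<longleftrightarrow> (\<forall>j. summable (\<lambda>n. (1 - 1/2^j :: real) ^ card (w \<inter> block n)))"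

lemma finite_block [simp]: "finite (block n)"
  by (simp add: block_def)

lemma card_block: "card (block n) = 2^n"
  by (simp add: block_def)

lemma less_of_mem_block: "i \<in> block n \<Longrightarrow> n < i"
  by (auto simp: block_def intro: less_le_trans[OF less_exp])

lemma eventually_disjoint_block:
  assumes "finite E"
  shows "eventually (\<lambda>n. E \<inter> block n = {}) sequentially"
proof (rule eventually_sequentiallyI)
  fix n assume "Max (insert 0 E) \<le> n"
  then show "E \<inter> block n = {}"
    using assms by (auto dest!: less_of_mem_block)
qed

lemma thick_UNIV: "thick UNIV"
  unfolding thick_def
proof
  fix j :: nat
  let ?c = "1 - 1/2^j :: real"
  have c: "0 \<le> ?c" "?c < 1"
    by simp_all
  then have "?c ^ card (UNIV \<inter> block n) \<le> ?c ^ n" for n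
    by (simp add: card_block less_imp_le power_decreasing)
  with c show "summable (\<lambda>n. ?c ^ card (UNIV \<inter> block n))"
    by (intro summable_comparison_test'[OF summable_geometric, of ?c 0]) auto
qed

lemma thick_eventually_meets_block:
  assumes "thick w"
  shows "eventually (\<lambda>n. w \<inter> block n \<noteq> {}) sequentially"
proof -
  have "summable (\<lambda>n. (1/2 :: real) ^ card (w \<inter> block n))"
    using assms[unfolded thick_def, rule_format, of 1] by simp
  then have "(\<lambda>n. (1/2 :: real) ^ card (w \<inter> block n)) \<longlonglongrightarrow> 0"
    by (rule summable_LIMSEQ_zero)
  then have "eventually (\<lambda>n. (1/2 :: real) ^ card (w \<inter> block n) < 1) sequentially"
    by (rule order_tendstoD) simp
  then show ?thesis
    by eventually_elim auto
qed

lemma AE_summable_power_card_Int: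
  fixes c :: real
  assumes c: "0 \<le> c" and W: "\<And>n. finite (W n)"
    and summable: "summable (\<lambda>n. ((1 + c) / 2) ^ card (W n))"
  shows "AE x in cantor_measure. summable (\<lambda>n. c ^ card (W n \<inter> {i. x i}))"
proof -
  interpret prob_space cantor_measure by (rule prob_space_cantor_measure)
  define f where "f n x = ennreal (c ^ card (W n \<inter> {i. x i}))" for n x
  have f_measurable: "f n \<in> borel_measurable cantor_measure" for n
  proof -
    have "f n = (\<lambda>x. ennreal (\<Prod>i\<in>W n. if x i then c else 1))"
      using W by (simp add: fun_eq_iff f_def power_card_Int_eq_prod)
    also have "\<dots> \<in> borel_measurable cantor_measure"
      by measurable
    finally show ?thesis .
  qed
  have "(\<integral>\<^sup>+x. (\<Sum>n. f n x) \<partial>cantor_measure) = (\<Sum>n. \<integral>\<^sup>+x. f n x \<partial>cantor_measure)"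
    by (rule nn_integral_suminf[OF f_measurable])
  also have "\<dots> = (\<Sum>n. ennreal (((1 + c) / 2) ^ card (W n)))"
    using W c by (simp add: f_def nn_integral_cantor_power_card_Int)
  also have "\<dots> = ennreal (\<Sum>n. ((1 + c) / 2) ^ card (W n))"
    using summable c by (intro suminf_ennreal2) auto
  finally have "(\<integral>\<^sup>+x. (\<Sum>n. f n x) \<partial>cantor_measure) \<noteq> \<infinity>"
    by simp
  then have "AE x in cantor_measure. (\<Sum>n. f n x) \<noteq> \<infinity>"
    by (intro nn_integral_PInf_AE borel_measurable_suminf_order f_measurable)
  then show ?thesis
    by (rule eventually_mono) (use c in \<open>auto simp: f_def intro: summable_suminf_not_top\<close>)
qed

lemma AE_thick_Int:
  assumes "thick w"
  shows "AE x in cantor_measure. thick (w \<inter> {i. x i})"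
proof -
  have "AE x in cantor_measure. summable (\<lambda>n. (1 - 1/2^j :: real) ^ card (w \<inter> block n \<inter> {i. x i}))"
    for j :: nat
  proof (rule AE_summable_power_card_Int)
    have "(1 + (1 - 1/2^j)) / 2 = (1 - 1/2^Suc j :: real)"
      by (simp add: field_simps)
    then show "summable (\<lambda>n. ((1 + (1 - 1/2^j)) / 2 :: real) ^ card (w \<inter> block n))"
      using assms by (simp only: thick_def)
  qed simp_all
  moreover have "w \<inter> block n \<inter> {i. x i} = w \<inter> {i. x i} \<inter> block n" for n x
    by blast
  ultimately show ?thesis
    by (simp add: thick_def AE_all_countable)
qed

section \<open>A zero-one law for sets invariant under finite flips\<close>

definition coordinate_events :: "nat \<Rightarrow> (nat \<Rightarrow> bool) set set" where
  "coordinate_events i = sigma_sets UNIV {(\<lambda>x. x i) -` A | A. A \<in> sets coin}"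

lemma measurable_coordinate_tail:
  assumes "n \<le> i"
  shows "(\<lambda>x. x i) \<in> measurable (sigma UNIV (\<Union>(coordinate_events ` {n..}))) (count_space UNIV)"
proof (rule measurableI)
  fix A :: "bool set"
  have "(\<lambda>x. x i) -` A \<in> coordinate_events i"
    unfolding coordinate_events_def by (intro sigma_sets.Basic) auto
  with assms show "(\<lambda>x. x i) -` A \<inter> space (sigma UNIV (\<Union>(coordinate_events ` {n..})))
      \<in> sets (sigma UNIV (\<Union>(coordinate_events ` {n..})))"
    by (auto intro: sigma_sets.Basic)
qed simp

lemma finite_flip_invariant_tail:
  assumes B: "B \<in> sets cantor_measure"
    and invariant: "\<And>x E. finite E \<Longrightarrow> x \<in> B \<Longrightarrow> flip_at E x \<in> B"
  shows "B \<in> sigma_sets UNIV (\<Union>(coordinate_events ` {n..}))"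
proof -
  let ?N = "sigma UNIV (\<Union>(coordinate_events ` {n..}))"
  \<comment> \<open>Forgetting the first n coordinates is measurable for the tail sigma-algebra, and it is
    a finite flip, so it does not change membership in B.\<close>
  define r where "r x = (\<lambda>i. n \<le> i \<and> x i)" for x :: "nat \<Rightarrow> bool"
  have r_flip: "r x = flip_at {i. i < n \<and> x i} x" "x = flip_at {i. i < n \<and> x i} (r x)" for x
    by (auto simp: r_def flip_at_def fun_eq_iff)
  have "(\<lambda>x. n \<le> i \<and> x i) \<in> measurable ?N coin" for i
    by (cases "n \<le> i") (simp_all add: measurable_into_coin measurable_coordinate_tail)
  then have "r \<in> measurable ?N cantor_measure"
    unfolding cantor_measure_eq r_def by (rule measurable_PiM_single') (simp add: space_PiM)
  then have "r -` B \<inter> space ?N \<in> sets ?N"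
    using B by (rule measurable_sets)
  moreover have "r -` B = B"
  proof -
    have "finite {i. i < n \<and> x i}" for x
      by simp
    then have "r x \<in> B \<longleftrightarrow> x \<in> B" for x
      using invariant r_flip by metis
    then show ?thesis
      by auto
  qed
  ultimately show ?thesis
    by simp
qed

lemma finite_flip_invariant_zero_one:
  assumes B: "B \<in> sets cantor_measure"
    and invariant: "\<And>x E. finite E \<Longrightarrow> x \<in> B \<Longrightarrow> flip_at E x \<in> B"
  shows "measure cantor_measure B = 0 \<or> measure cantor_measure B = 1"
proof -
  interpret prob_space cantor_measure by (rule prob_space_cantor_measure)
  have "sigma_algebra (space cantor_measure) (coordinate_events i)" for i
    unfolding coordinate_events_def by (simp add: sigma_algebra_sigma_sets)
  moreover have "indep_sets coordinate_events UNIV"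
    using indep_vars_cantor_coordinates unfolding indep_vars_def coordinate_events_def by simp
  moreover have "B \<in> tail_events coordinate_events"
    using finite_flip_invariant_tail[OF B invariant] by (simp add: tail_events_def)
  ultimately show ?thesis
    by (rule kolmogorov_0_1_law)
qed

definition flip_saturation :: "(nat \<Rightarrow> bool) set \<Rightarrow> (nat \<Rightarrow> bool) set" where
  "flip_saturation B = (\<Union>E\<in>{E. finite E}. flip_at E -` B)"

lemma sets_flip_saturation:
  "B \<in> sets cantor_measure \<Longrightarrow> flip_saturation B \<in> sets cantor_measure"
  unfolding flip_saturation_def
  by (intro sets.countable_UN' countable_Collect_finite)
    (auto intro: measurable_sets[OF measurable_flip_at, simplified])

lemma subset_flip_saturation: "B \<subseteq> flip_saturation B"
  unfolding flip_saturation_def by (intro subsetI UN_I[of "{}"]) simp_all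

lemma flip_saturation_subset:
  assumes "B \<subseteq> A" and invariant: "\<And>x E. finite E \<Longrightarrow> x \<in> A \<Longrightarrow> flip_at E x \<in> A"
  shows "flip_saturation B \<subseteq> A"
proof
  fix x assume "x \<in> flip_saturation B"
  then obtain E where "finite E" "flip_at E x \<in> A"
    using assms(1) unfolding flip_saturation_def by auto
  then show "x \<in> A"
    using invariant[of E "flip_at E x"] by simp
qed

lemma flip_at_mem_flip_saturation:
  assumes "finite E" and "x \<in> flip_saturation B"
  shows "flip_at E x \<in> flip_saturation B"
proof -
  obtain E' where E': "finite E'" "flip_at E' x \<in> B"
    using assms(2) unfolding flip_saturation_def by auto
  let ?D = "(E' - E) \<union> (E - E')"
  have "(?D - E) \<union> (E - ?D) = E'"
    by blast
  then have "flip_at ?D (flip_at E x) \<in> B"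
    using E' by (simp add: flip_at_flip_at)
  moreover have "finite ?D"
    using E' assms(1) by simp
  ultimately show ?thesis
    unfolding flip_saturation_def by blast
qed

lemma finite_flip_invariant_kernel:
  assumes A: "A \<in> sets (completion cantor_measure)"
    and invariant: "\<And>x E. finite E \<Longrightarrow> x \<in> A \<Longrightarrow> flip_at E x \<in> A"
  obtains B where "B \<in> sets cantor_measure" "B \<subseteq> A"
    "emeasure cantor_measure B = emeasure (completion cantor_measure) A"
    "\<And>x E. finite E \<Longrightarrow> x \<in> B \<Longrightarrow> flip_at E x \<in> B"
proof
  define B0 where "B0 = main_part cantor_measure A"
  have B0: "B0 \<in> sets cantor_measure" "B0 \<subseteq> A"
    "emeasure cantor_measure B0 = emeasure (completion cantor_measure) A"
    using main_part_null_part_Un[OF A] A unfolding B0_def by (simp, blast, simp)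
  let ?B = "flip_saturation B0"
  show B: "?B \<in> sets cantor_measure" "?B \<subseteq> A"
    using B0 invariant by (simp_all add: sets_flip_saturation flip_saturation_subset)
  show "finite E \<Longrightarrow> x \<in> ?B \<Longrightarrow> flip_at E x \<in> ?B" for x E
    by (rule flip_at_mem_flip_saturation)
  have "emeasure cantor_measure B0 \<le> emeasure cantor_measure ?B"
    using B(1) by (rule emeasure_mono[OF subset_flip_saturation])
  moreover have "emeasure cantor_measure ?B = emeasure (completion cantor_measure) ?B"
    using B(1) by simp
  moreover have "\<dots> \<le> emeasure (completion cantor_measure) A"
    using B(2) A by (rule emeasure_mono)
  ultimately show "emeasure cantor_measure ?B = emeasure (completion cantor_measure) A"
    using B0(3) by simp
qed

lemma finite_flip_invariant_null:
  assumes A: "A \<in> sets (completion cantor_measure)"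
    and invariant: "\<And>x E. finite E \<Longrightarrow> x \<in> A \<Longrightarrow> flip_at E x \<in> A"
    and disjoint: "\<And>x. x \<in> A \<Longrightarrow> flip_at UNIV x \<notin> A"
  shows "A \<in> null_sets (completion cantor_measure)"
proof -
  interpret prob_space cantor_measure by (rule prob_space_cantor_measure)
  obtain B where B: "B \<in> sets cantor_measure" "B \<subseteq> A"
    and eq: "emeasure cantor_measure B = emeasure (completion cantor_measure) A"
    and B_invariant: "\<And>x E. finite E \<Longrightarrow> x \<in> B \<Longrightarrow> flip_at E x \<in> B"
    using finite_flip_invariant_kernel[OF A invariant] by blast
  have flip_B: "flip_at UNIV -` B \<in> sets cantor_measure"
    using measurable_sets[OF measurable_flip_at B(1)] by simp
  have "flip_at UNIV -` B \<inter> B = {}"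
    using B(2) disjoint by auto
  then have "prob (flip_at UNIV -` B) + prob B = prob (flip_at UNIV -` B \<union> B)"
    using flip_B B(1) by (simp add: finite_measure_Union)
  also have "\<dots> \<le> 1"
    by (rule prob_le_1)
  finally have "prob B \<le> 1/2"
    using emeasure_flip_at_vimage[OF B(1), of UNIV] by (simp add: emeasure_eq_measure)
  with finite_flip_invariant_zero_one[OF B(1) B_invariant] have "prob B = 0"
    by auto
  then show ?thesis
    using A eq B(1) by (simp add: null_sets_def emeasure_eq_measure)
qed

section \<open>Sets meeting almost every block are meager\<close>

lemma topspace_cantor_top [simp]: "topspace cantor_top = UNIV"
  by (simp add: cantor_top_def PiE_UNIV_domain)

lemma closedin_cantor_coordinate: "closedin cantor_top {z. z i}"
proof -
  have "closedin cantor_top {z \<in> topspace cantor_top. z i \<in> {True}}"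
    unfolding cantor_top_def
    by (rule closedin_continuous_map_preimage[OF continuous_map_product_projection]) auto
  then show ?thesis
    by simp
qed

definition meets_blocks_from :: "nat \<Rightarrow> (nat \<Rightarrow> bool) set" where
  "meets_blocks_from m = {z. \<forall>n\<ge>m. \<exists>i\<in>block n. z i}"

lemma closedin_meets_blocks_from: "closedin cantor_top (meets_blocks_from m)"
proof -
  have "meets_blocks_from m = (\<Inter>n\<in>{m..}. \<Union>i\<in>block n. {z. z i})"
    by (auto simp: meets_blocks_from_def)
  also have "closedin cantor_top \<dots>"
  proof -
    have "closedin cantor_top (\<Union>i\<in>block n. {z. z i})" for n
      by (rule closedin_Union) (auto simp: closedin_cantor_coordinate)
    then show ?thesis
      by (intro closedin_Inter) auto
  qed
  finally show ?thesis .
qed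

lemma nowhere_dense_meets_blocks_from: "nowhere_dense_in cantor_top (meets_blocks_from m)"
proof -
  have "T = {}" if T: "openin cantor_top T" "T \<subseteq> meets_blocks_from m" for T
  proof (rule ccontr)
    assume "T \<noteq> {}"
    then obtain x where "x \<in> T"
      by auto
    with T obtain U where U: "finite {i. U i \<noteq> UNIV}" "x \<in> Pi\<^sub>E UNIV U" "Pi\<^sub>E UNIV U \<subseteq> T"
      unfolding cantor_top_def openin_product_topology_alt by auto
    define J where "J = {i. U i \<noteq> UNIV}"
    define y where "y i = (i \<in> J \<and> x i)" for i
    have "y i \<in> U i" for i
      using U(2) by (cases "i \<in> J") (auto simp: y_def J_def PiE_UNIV_domain)
    then have "y \<in> Pi\<^sub>E UNIV U"
      by (simp add: PiE_UNIV_domain)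
    then have "y \<in> meets_blocks_from m"
      using U(3) T(2) by blast
    then obtain i where i: "i \<in> block (max m (Suc (Max (insert 0 J))))" "y i"
      using max.cobounded1[of m] unfolding meets_blocks_from_def by blast
    then have "Max (insert 0 J) < i"
      using less_of_mem_block by fastforce
    moreover have "i \<le> Max (insert 0 J)"
      using i(2) U(1) by (simp add: y_def J_def[symmetric])
    ultimately show False
      by simp
  qed
  then have "cantor_top interior_of meets_blocks_from m = {}"
    by (simp add: interior_of_eq_empty)
  then show ?thesis
    by (simp add: nowhere_dense_in_def closure_of_closedin[OF closedin_meets_blocks_from])
qed

lemma meager_in_cantor_top_if_eventually_meets_blocks:
  assumes "\<And>z. z \<in> A \<Longrightarrow> eventually (\<lambda>n. \<exists>i\<in>block n. z i) sequentially"
  shows "meager_in cantor_top A"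
  unfolding meager_in_def
proof (intro exI conjI)
  show "countable (range meets_blocks_from)"
    by simp
  show "\<forall>N\<in>range meets_blocks_from. nowhere_dense_in cantor_top N"
    using nowhere_dense_meets_blocks_from by auto
  show "A \<subseteq> \<Union>(range meets_blocks_from)"
    using assms by (auto simp: meets_blocks_from_def eventually_sequentially)
qed

section \<open>Filters extending the cofinite filter\<close>

lemma mem_char_set_iff: "x \<in> char_set F \<longleftrightarrow> {i. x i} \<in> F"
proof
  assume "x \<in> char_set F"
  then obtain A where "A \<in> F" "x = (\<lambda>n. n \<in> A)"
    by (auto simp: char_set_def)
  then show "{i. x i} \<in> F"
    by simp
next
  assume "{i. x i} \<in> F"
  then show "x \<in> char_set F"
    unfolding char_set_def by (rule rev_image_eqI) simp
qed

lemma not_principal_filter_if_cofinite: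
  assumes "filter_on_nat F" and cofinite: "\<And>E. finite E \<Longrightarrow> - E \<in> F"
  shows "\<not> principal_filter_on_nat F"
proof
  assume "principal_filter_on_nat F"
  then obtain A where A: "F = {B. A \<subseteq> B}"
    unfolding principal_filter_on_nat_def by blast
  then have "A \<subseteq> - {i}" for i
    using cofinite[of "{i}"] by auto
  then have "{} \<in> F"
    using A by auto
  with \<open>filter_on_nat F\<close> show False
    by (simp add: filter_on_nat_def)
qed

lemma measure_zero_if_lebesgue_measurable_filter:
  assumes F: "filter_on_nat F" and cofinite: "\<And>E. finite E \<Longrightarrow> - E \<in> F"
    and "lebesgue_measurable_cantor (char_set F)"
  shows "measure_zero_cantor (char_set F)"
  unfolding measure_zero_cantor_def
proof (rule finite_flip_invariant_null)
  show "char_set F \<in> sets (completion cantor_measure)"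
    using assms(3) by (simp add: lebesgue_measurable_cantor_def)
  have up: "A \<in> F \<Longrightarrow> A \<subseteq> B \<Longrightarrow> B \<in> F" and inter: "A \<in> F \<Longrightarrow> B \<in> F \<Longrightarrow> A \<inter> B \<in> F"
    and empty: "{} \<notin> F" for A B
    using F by (auto simp: filter_on_nat_def)
  have flip_set: "{i. flip_at E x i} = ({i. x i} - E) \<union> (E - {i. x i})" for E x
    by (auto simp: flip_at_def)
  show "flip_at E x \<in> char_set F" if "finite E" "x \<in> char_set F" for x E
  proof -
    have "{i. x i} \<inter> - E \<in> F"
      using that by (simp add: mem_char_set_iff inter cofinite)
    then show ?thesis
      by (simp add: mem_char_set_iff flip_set) (erule up, blast)
  qed
  show "flip_at UNIV x \<notin> char_set F" if "x \<in> char_set F" for x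
  proof
    assume "flip_at UNIV x \<in> char_set F"
    with that have "{i. x i} \<inter> {i. flip_at UNIV x i} \<in> F"
      by (simp add: mem_char_set_iff inter)
    moreover have "{i. x i} \<inter> {i. flip_at UNIV x i} = {}"
      by (auto simp: flip_at_def)
    ultimately show False
      using empty by simp
  qed
qed

section \<open>Thick-centered families and the filters they generate\<close>

definition thick_centered :: "(nat \<Rightarrow> bool) set \<Rightarrow> bool" where
  "thick_centered X \<longleftrightarrow> (\<forall>T\<in>Fpow X. thick (\<Inter>x\<in>T. {i. x i}))"

definition filter_generated_with_cofinite :: "(nat \<Rightarrow> bool) set \<Rightarrow> nat set set" where
  "filter_generated_with_cofinite X =
     {Y. \<exists>T\<in>Fpow X. \<exists>E. finite E \<and> (\<Inter>x\<in>T. {i. x i}) - E \<subseteq> Y}"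

lemma cofinite_mem_filter_generated_with_cofinite:
  "finite E \<Longrightarrow> - E \<in> filter_generated_with_cofinite X"
  unfolding filter_generated_with_cofinite_def by (intro CollectI bexI[of _ "{}"]) (auto simp: Fpow_def)

lemma subset_char_set_filter_generated_with_cofinite:
  "X \<subseteq> char_set (filter_generated_with_cofinite X)"
proof
  fix x assume "x \<in> X"
  then have "{x} \<in> Fpow X" "(\<Inter>y\<in>{x}. {i. y i}) - {} \<subseteq> {i. x i}"
    by (auto simp: Fpow_def)
  then show "x \<in> char_set (filter_generated_with_cofinite X)"
    unfolding mem_char_set_iff filter_generated_with_cofinite_def by blast
qed

lemma eventually_meets_block_if_mem_filter_generated_with_cofinite:
  assumes "thick_centered X" and "Y \<in> filter_generated_with_cofinite X"
  shows "eventually (\<lambda>n. Y \<inter> block n \<noteq> {}) sequentially"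
proof -
  obtain T E where "T \<in> Fpow X" "finite E" and TE: "(\<Inter>x\<in>T. {i. x i}) - E \<subseteq> Y"
    using assms(2) unfolding filter_generated_with_cofinite_def by blast
  then have "eventually (\<lambda>n. (\<Inter>x\<in>T. {i. x i}) \<inter> block n \<noteq> {}) sequentially"
    and "eventually (\<lambda>n. E \<inter> block n = {}) sequentially"
    using assms(1) by (auto simp: thick_centered_def intro: thick_eventually_meets_block eventually_disjoint_block)
  then show ?thesis
    by eventually_elim (use TE in blast)
qed

lemma meager_in_char_set_filter_generated_with_cofinite:
  assumes "thick_centered X"
  shows "meager_in cantor_top (char_set (filter_generated_with_cofinite X))"
proof (rule meager_in_cantor_top_if_eventually_meets_blocks)
  fix z assume "z \<in> char_set (filter_generated_with_cofinite X)"
  then have "eventually (\<lambda>n. {i. z i} \<inter> block n \<noteq> {}) sequentially"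
    using eventually_meets_block_if_mem_filter_generated_with_cofinite[OF assms]
    by (simp add: mem_char_set_iff)
  then show "eventually (\<lambda>n. \<exists>i\<in>block n. z i) sequentially"
    by (rule eventually_mono) blast
qed

lemma filter_on_nat_filter_generated_with_cofinite:
  assumes "thick_centered X"
  shows "filter_on_nat (filter_generated_with_cofinite X)"
  unfolding filter_on_nat_def
proof (intro conjI allI impI)
  let ?F = "filter_generated_with_cofinite X"
  show "UNIV \<in> ?F"
    using cofinite_mem_filter_generated_with_cofinite[of "{}"] by simp
  show "{} \<notin> ?F"
    using eventually_meets_block_if_mem_filter_generated_with_cofinite[OF assms, of "{}"] by auto
  show "B \<in> ?F" if "A \<in> ?F" "A \<subseteq> B" for A B
    using that unfolding filter_generated_with_cofinite_def by blast
  show "A \<inter> B \<in> ?F" if A_mem: "A \<in> ?F" and B_mem: "B \<in> ?F" for A B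
  proof -
    obtain T E where T: "T \<in> Fpow X" "finite E" and A: "(\<Inter>x\<in>T. {i. x i}) - E \<subseteq> A"
      using A_mem unfolding filter_generated_with_cofinite_def by blast
    obtain T' E' where T': "T' \<in> Fpow X" "finite E'" and B: "(\<Inter>x\<in>T'. {i. x i}) - E' \<subseteq> B"
      using B_mem unfolding filter_generated_with_cofinite_def by blast
    have "(\<Inter>x\<in>T \<union> T'. {i. x i}) - (E \<union> E') \<subseteq> A \<inter> B"
      using A B by blast
    moreover have "T \<union> T' \<in> Fpow X" "finite (E \<union> E')"
      using T T' by (simp_all add: Fpow_def)
    ultimately show ?thesis
      unfolding filter_generated_with_cofinite_def by (intro CollectI bexI exI conjI)
  qed
qed

lemma exists_maximal_thick_centered_subset:
  "\<exists>X\<subseteq>S. thick_centered X \<and> (\<forall>Y\<subseteq>S. thick_centered Y \<longrightarrow> X \<subseteq> Y \<longrightarrow> Y = X)"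
proof -
  have "\<exists>U\<in>{X. X \<subseteq> S \<and> thick_centered X}. \<forall>X\<in>C. X \<subseteq> U" if C: "C \<in> chains {X. X \<subseteq> S \<and> thick_centered X}" for C
  proof (intro bexI ballI)
    show "\<Union>C \<in> {X. X \<subseteq> S \<and> thick_centered X}"
      unfolding thick_centered_def
    proof (intro CollectI conjI ballI)
      show "\<Union>C \<subseteq> S"
        using C by (auto simp: chains_def)
      fix T assume T: "T \<in> Fpow (\<Union>C)"
      show "thick (\<Inter>x\<in>T. {i. x i})"
      proof (cases "T = {}")
        case True
        then show ?thesis
          by (simp add: thick_UNIV)
      next
        case False
        have "subset.chain UNIV C"
          using C by (simp add: chains_def chain_subset_alt_def)
        with False T obtain B where "B \<in> C" "T \<subseteq> B"
          using finite_subset_Union_chain[of T C UNIV] by (auto simp: Fpow_def)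
        with C T show ?thesis
          by (auto simp: chains_def thick_centered_def Fpow_def)
      qed
    qed
  qed auto
  then obtain M where "M \<in> {X. X \<subseteq> S \<and> thick_centered X}" "\<forall>X\<in>{X. X \<subseteq> S \<and> thick_centered X}. M \<subseteq> X \<longrightarrow> X = M"
    using Zorn_Lemma2[of "{X. X \<subseteq> S \<and> thick_centered X}"] by blast
  then show ?thesis
    by blast
qed

section \<open>Generalized Sierpinski sets\<close>

lemma card_of_Fpow_card_le_ordLess_stable:
  fixes X :: "'a set" and S :: "'b set"
  assumes stable: "stable |S|" and "infinite S" and X: "|X| <o |S|"
  shows "|{T \<in> Fpow X. card T \<le> n}| <o |S|"
proof (induction n)
  case 0
  have "{T \<in> Fpow X. card T \<le> 0} = {{}}"
    by (auto simp: Fpow_def)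
  then show ?case
    using finite_ordLess_infinite[OF card_of_Well_order card_of_Well_order, of "{{}}" S]
      \<open>infinite S\<close> by (simp add: Field_card_of)
next
  case (Suc n)
  let ?level = "{T \<in> Fpow X. card T \<le> n}"
  have "{T \<in> Fpow X. card T \<le> Suc n} \<subseteq> ?level \<union> (\<lambda>(T, x). insert x T) ` (?level \<times> X)"
  proof
    fix T assume T: "T \<in> {T \<in> Fpow X. card T \<le> Suc n}"
    show "T \<in> ?level \<union> (\<lambda>(T, x). insert x T) ` (?level \<times> X)"
    proof (cases "card T \<le> n")
      case False
      then obtain x where "x \<in> T"
        by fastforce
      with T False have "(T - {x}, x) \<in> ?level \<times> X" "T = insert x (T - {x})"
        by (auto simp: Fpow_def)
      then show ?thesis
        by (metis (no_types, lifting) UnI2 case_prod_conv image_eqI)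
    qed (use T in simp)
  qed
  moreover have "|?level \<times> X| <o |S|"
    using stable_elim[OF stable Suc.IH X] by simp
  then have "|(\<lambda>(T, x). insert x T) ` (?level \<times> X)| <o |S|"
    using card_of_image ordLeq_ordLess_trans by blast
  then have "|?level \<union> (\<lambda>(T, x). insert x T) ` (?level \<times> X)| <o |S|"
    using card_of_Un_ordLess_infinite[OF \<open>infinite S\<close> Suc.IH] by blast
  ultimately show ?case
    using card_of_mono1 ordLeq_ordLess_trans by blast
qed

lemma card_of_Fpow_ordLess_stable:
  fixes X :: "'a set" and S :: "'b set"
  assumes stable: "stable |S|" and "uncountable S" and X: "|X| <o |S|"
  shows "|Fpow X| <o |S|"
proof -
  have "|UNIV :: nat set| <o |S|"
    using \<open>uncountable S\<close> countable_card_of_nat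
      not_ordLeq_iff_ordLess[OF card_of_Well_order card_of_Well_order] by blast
  moreover have "|{T \<in> Fpow X. card T \<le> n}| <o |S|" for n
    using \<open>uncountable S\<close> countable_finite
    by (intro card_of_Fpow_card_le_ordLess_stable[OF stable _ X]) blast
  moreover have "Fpow X = (\<Union>n. {T \<in> Fpow X. card T \<le> n})"
    by (auto simp: Fpow_def)
  ultimately show ?thesis
    using stable_UNION[OF stable, of UNIV "\<lambda>n. {T \<in> Fpow X. card T \<le> n}"] by simp
qed

lemma stable_card_of_generalized_Sierpinski_set:
  assumes "generalized_Sierpinski_set S"
  shows "stable |S|"
proof -
  have "infinite S" "regularCard |S|"
    using assms countable_finite by (auto simp: generalized_Sierpinski_set_def)
  then show ?thesis
    using regularCard_stable[OF card_of_Card_order, of S] by (simp add: Field_card_of)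
qed

lemma measure_zero_cantor_if_AE:
  assumes "AE x in cantor_measure. P x"
  shows "measure_zero_cantor {x. \<not> P x}"
proof -
  obtain N where "{x. \<not> P x} \<subseteq> N" "N \<in> null_sets cantor_measure"
    using assms by (auto elim!: AE_E simp: null_sets_def)
  then show ?thesis
    unfolding measure_zero_cantor_def by (blast intro: null_sets_completion_subset null_sets_completionI)
qed

lemma exists_thick_centered_insert:
  assumes S: "generalized_Sierpinski_set S"
    and X: "X \<subseteq> S" "thick_centered X" "|X| <o |S|"
  shows "\<exists>s\<in>S - X. thick_centered (insert s X)"
proof -
  have "infinite S" and small_null: "\<And>H. measure_zero_cantor H \<Longrightarrow> |S \<inter> H| <o |S|"
    using S countable_finite by (auto simp: generalized_Sierpinski_set_def)
  have stable: "stable |S|"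
    using S by (rule stable_card_of_generalized_Sierpinski_set)
  define spoil where "spoil T = {x. \<not> thick ((\<Inter>t\<in>T. {i. t i}) \<inter> {i. x i})}" for T
  have "measure_zero_cantor (spoil T)" if "T \<in> Fpow X" for T
    unfolding spoil_def
    using that X(2) by (intro measure_zero_cantor_if_AE AE_thick_Int) (simp add: thick_centered_def)
  then have "|\<Union>T\<in>Fpow X. S \<inter> spoil T| <o |S|"
    using S X(3) stable by (intro stable_UNION[OF stable] card_of_Fpow_ordLess_stable small_null)
      (simp_all add: generalized_Sierpinski_set_def)
  then have small: "|X \<union> (\<Union>T\<in>Fpow X. S \<inter> spoil T)| <o |S|"
    using card_of_Un_ordLess_infinite[OF \<open>infinite S\<close> X(3)] by blast
  have "\<not> S \<subseteq> X \<union> (\<Union>T\<in>Fpow X. S \<inter> spoil T)"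
    using ordLeq_ordLess_trans[OF card_of_mono1 small] ordLess_irreflexive by blast
  then obtain s where s: "s \<in> S" "s \<notin> X" "\<And>T. T \<in> Fpow X \<Longrightarrow> s \<notin> spoil T"
    by blast
  have "thick (\<Inter>x\<in>T. {i. x i})" if "T \<in> Fpow (insert s X)" for T
  proof (cases "s \<in> T")
    case True
    then have "(\<Inter>x\<in>T. {i. x i}) = (\<Inter>t\<in>T - {s}. {i. t i}) \<inter> {i. s i}"
      by blast
    moreover have "T - {s} \<in> Fpow X"
      using that by (auto simp: Fpow_def)
    ultimately show ?thesis
      using s(3) by (simp add: spoil_def)
  next
    case False
    then have "T \<in> Fpow X"
      using that by (auto simp: Fpow_def)
    then show ?thesis
      using X(2) by (simp add: thick_centered_def)
  qed
  then show ?thesis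
    using s(1,2) by (auto simp: thick_centered_def)
qed

lemma maximal_thick_centered_not_null:
  assumes S: "generalized_Sierpinski_set S"
    and X: "X \<subseteq> S" "thick_centered X" and maximal: "\<And>Y. Y \<subseteq> S \<Longrightarrow> thick_centered Y \<Longrightarrow> X \<subseteq> Y \<Longrightarrow> Y = X"
    and H: "measure_zero_cantor H"
  shows "\<not> X \<subseteq> H"
proof
  assume "X \<subseteq> H"
  with X(1) have "|X| \<le>o |S \<inter> H|"
    by (intro card_of_mono1) blast
  also have "|S \<inter> H| <o |S|"
    using S H by (simp add: generalized_Sierpinski_set_def)
  finally obtain s where "s \<in> S - X" "thick_centered (insert s X)"
    using exists_thick_centered_insert[OF S X] by blast
  with X(1) maximal[of "insert s X"] show False
    by blast
qed

theorem theorem2p2: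
  assumes "\<exists>S. generalized_Sierpinski_set S"
  shows "\<exists>F. filter_on_nat F \<and> \<not> principal_filter_on_nat F \<and>
           meager_in cantor_top (char_set F) \<and>
           \<not> lebesgue_measurable_cantor (char_set F)"
proof -
  obtain S where S: "generalized_Sierpinski_set S"
    using assms by blast
  obtain X where X: "X \<subseteq> S" "thick_centered X"
    and maximal: "\<And>Y. Y \<subseteq> S \<Longrightarrow> thick_centered Y \<Longrightarrow> X \<subseteq> Y \<Longrightarrow> Y = X"
    using exists_maximal_thick_centered_subset[of S] by blast
  let ?F = "filter_generated_with_cofinite X"
  have filter: "filter_on_nat ?F"
    using X(2) by (rule filter_on_nat_filter_generated_with_cofinite)
  have cofinite: "\<And>E. finite E \<Longrightarrow> - E \<in> ?F"
    by (rule cofinite_mem_filter_generated_with_cofinite)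
  have "\<not> lebesgue_measurable_cantor (char_set ?F)"
    using measure_zero_if_lebesgue_measurable_filter[OF filter] cofinite
      subset_char_set_filter_generated_with_cofinite maximal_thick_centered_not_null[OF S X maximal]
    by blast
  then show ?thesis
    using filter not_principal_filter_if_cofinite[OF filter cofinite]
      meager_in_char_set_filter_generated_with_cofinite[OF X(2)] by blast
qed

end
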